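(* Let $\alpha\in(0,1)$, let $0<\varepsilon\le 1/4$, and let $(\varepsilon_t)_{t\ge 0}$ be a spending sequence as described in the context. Suppose there exist constants $\lambda>0$, $q>1$ and $T\in\mathbb{N}$ such that $\varepsilon_t-\varepsilon_{t-1}\ge \lambda t^{-q}$ for all $t\ge T$. Let $p$ be a random variable with values in $[0,1]$ and cumulative distribution function $F$, and suppose that $F$ is H\"older continuous with exponent $\xi>0$ in a neighborhood of $\alpha$, i.e. there exist an open interval $V\ni\alpha$ and $c>0$ with $|F(x)-F(y)|\le c|x-y|^{\xi}$ for all $x,y\in V$. Let $N\in\mathbb{N}$, let $p_1,\dots,p_N$ be independent copies of $p$, and for each $i$, conditionally on $p_1,\dots,p_N$, let $X^i_1,X^i_2,\dots$ be independent Bernoulli$(p_i)$ variables (independently across $i$). Let $S^i_t=\sum_{j=1}^t X^i_j$ and $\tau_i=\inf\{t\in\mathbb{N}: S^i_t\ge U_t \text{ or } S^i_t\le L_t\}$ (with $\inf\emptyset=\infty$), where $U_t,L_t$ are the stopping boundaries defined in the context, and let $\tau_{(1)}\le\dots\le\tau_{(N)}$ be the order statistics of $\tau_1,\dots,\tau_N$. Then $\mathbb{E}[\tau_{(i)}]<\infty$ for every $i\le N-\lfloor 2/\xi\rfloor$. In particular, if $\xi=1$, then $\mathbb{E}[\tau_{(N-2)}]<\infty$.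
   Context: $\mathbb{N}=\{1,2,\dots\}$. A spending sequence is a sequence $(\varepsilon_t)_{t\ge0}$ of reals with $0\le\varepsilon_0\le\varepsilon_1\le\cdots$ and $\varepsilon_t\to\varepsilon$ as $t\to\infty$. For $r\in[0,1]$, let $\mathbb{P}_r$ denote a probability under which $X_1,X_2,\dots$ are i.i.d. Bernoulli$(r)$, and let $S_t=\sum_{j=1}^t X_j$. The stopping boundaries $(U_t)_{t\in\mathbb{N}}$, $(L_t)_{t\in\mathbb{N}}$ are defined recursively: with $\tau=\inf\{t\in\mathbb{N}: S_t\ge U_t\text{ or } S_t\le L_t\}$ (the events $\{\tau\ge t\}$, $\{\tau<t, S_\tau\ge U_\tau\}$, $\{\tau<t,S_\tau\le L_\tau\}$ depend only on $U_s,L_s$ for $s<t$), $U_t=\min\{j\in\mathbb{N}: \mathbb{P}_\alpha(\tau\ge t, S_t\ge j)+\mathbb{P}_\alpha(\tau<t, S_\tau\ge U_\tau)\le\varepsilon_t\}$, $L_t=\max\{j\in\mathbb{Z}: \mathbb{P}_\alpha(\tau\ge t, S_t\le j)+\mathbb{P}_\alpha(\tau<t, S_\tau\le L_\tau)\le\varepsilon_t\}$. *)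

theory Defs
  imports "HOL-Probability.Probability"
begin

text \<open>Paths are x :: nat => bool with X_j = x j for j >= 1 (x 0 is ignored).\<close>

definition Bern_seq :: "real \<Rightarrow> (nat \<Rightarrow> bool) measure" where
  "Bern_seq r = PiM UNIV (\<lambda>_::nat. measure_pmf (bernoulli_pmf r))"

definition Ssum :: "nat \<Rightarrow> (nat \<Rightarrow> bool) \<Rightarrow> int" where
  "Ssum t x = int (card {j \<in> {1..t}. x j})"

definition crosses :: "(nat \<Rightarrow> int \<times> int) \<Rightarrow> (nat \<Rightarrow> bool) \<Rightarrow> nat \<Rightarrow> bool" where
  "crosses B x s \<longleftrightarrow> Ssum s x \<ge> fst (B s) \<or> Ssum s x \<le> snd (B s)"

definition stop_time :: "(nat \<Rightarrow> int \<times> int) \<Rightarrow> (nat \<Rightarrow> bool) \<Rightarrow> enat" where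
  "stop_time B x = (if \<exists>s\<ge>1. crosses B x s then enat (LEAST s. s \<ge> 1 \<and> crosses B x s) else \<infinity>)"

text \<open>bnd a e n gives correct boundaries (U_s, L_s) at all times 1 <= s <= n.
  The boundary at time t = Suc n only uses boundaries at times s < t.\<close>
fun bnd :: "real \<Rightarrow> (nat \<Rightarrow> real) \<Rightarrow> nat \<Rightarrow> (nat \<Rightarrow> int \<times> int)" where
  "bnd a e 0 = (\<lambda>_. (0, 0))"
| "bnd a e (Suc n) =
     (let B = bnd a e n; t = Suc n; P = (\<lambda>A. measure (Bern_seq a) A);
          Up = P {x \<in> space (Bern_seq a). \<exists>s. stop_time B x = enat s \<and> s < t \<and> Ssum s x \<ge> fst (B s)};
          Lo = P {x \<in> space (Bern_seq a). \<exists>s. stop_time B x = enat s \<and> s < t \<and> Ssum s x \<le> snd (B s)};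
          u = (LEAST j::int. j \<ge> 1 \<and>
                 P {x \<in> space (Bern_seq a). enat t \<le> stop_time B x \<and> Ssum t x \<ge> j} + Up \<le> e t);
          l = (GREATEST j::int.
                 P {x \<in> space (Bern_seq a). enat t \<le> stop_time B x \<and> Ssum t x \<le> j} + Lo \<le> e t)
      in B(t := (u, l)))"

definition boundaries :: "real \<Rightarrow> (nat \<Rightarrow> real) \<Rightarrow> nat \<Rightarrow> int \<times> int" where
  "boundaries a e t = bnd a e t t"

definition arm_law :: "real measure \<Rightarrow> (real \<times> (nat \<Rightarrow> bool)) measure" where
  "arm_law mu = bind mu (\<lambda>r. return borel r \<Otimes>\<^sub>M Bern_seq r)"

definition order_stat :: "enat list \<Rightarrow> nat \<Rightarrow> enat" where
  "order_stat vs k = sort vs ! (k - 1)"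

end

theory Submission
  imports Defs "HOL-Real_Asymp.Real_Asymp"
begin

text \<open>Since the total spending is at most \<open>1/4\<close>, the recursion defining the boundaries never gets
  stuck, and Hoeffding's inequality under \<open>\<P>\<^sub>\<alpha>\<close>, combined with the spending increments
  \<open>\<lambda> t\<^sup>-\<^sup>q\<close>, gives \<open>\<bar>U\<^sub>t - \<alpha> t\<bar>, \<bar>L\<^sub>t - \<alpha> t\<bar> \<le> w\<^sub>t + 1\<close> with \<open>w\<^sub>t = sqrt (t/2 log (t\<^sup>q/\<lambda>))\<close>.
  An arm whose success probability is at distance \<open>t\<^sup>-\<^sup>\<gamma>\<close> from \<open>\<alpha>\<close>, \<open>\<gamma> < 1/2\<close>, survives up to
  time \<open>t\<close> only with probability \<open>exp (-c t\<^sup>1\<^sup>-\<^sup>2\<^sup>\<gamma>)\<close>, whereas Holder continuity of \<open>F\<close> makes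
  the prior mass within \<open>t\<^sup>-\<^sup>\<gamma>\<close> of \<open>\<alpha>\<close> of order \<open>t\<^sup>-\<^sup>\<gamma>\<^sup>\<xi>\<close>. Hence \<open>\<P>(\<tau> > t) = O(t\<^sup>-\<^sup>\<gamma>\<^sup>\<xi>)\<close>.
  The event \<open>\<tau>\<^sub>(\<^sub>i\<^sub>) > t\<close> needs \<open>m = N - i + 1\<close> arms surviving past \<open>t\<close>, so by independence
  and a union bound \<open>\<P>(\<tau>\<^sub>(\<^sub>i\<^sub>) > t) \<le> (N choose m) \<P>(\<tau> > t)\<^sup>m\<close>, which is summable as soon as
  \<open>\<gamma> \<xi> m > 1\<close>; a \<open>\<gamma> < 1/2\<close> with this property exists exactly when \<open>\<xi> m > 2\<close>.\<close>

section \<open>Bernoulli paths and the law of an arm\<close>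

lemma space_Bern_seq [simp]: "space (Bern_seq r) = UNIV"
  by (simp add: Bern_seq_def space_PiM)

lemma sets_Bern_seq [measurable_cong]:
  "sets (Bern_seq r) = sets (PiM UNIV (\<lambda>_::nat. count_space (UNIV::bool set)))"
  unfolding Bern_seq_def by (intro sets_PiM_cong) auto

lemma prob_space_Bern_seq: "prob_space (Bern_seq r)"
  unfolding Bern_seq_def by (intro prob_space_PiM) (simp add: measure_pmf.prob_space_axioms)

lemma Ssum_eq_sum: "real_of_int (Ssum t x) = (\<Sum>j\<in>{1..t}. if x j then 1 else 0)"
  by (simp add: Ssum_def sum.If_cases Int_def conj_commute)

lemma Ssum_le: "Ssum t x \<le> int t"
proof -
  have "card {j \<in> {1..t}. x j} \<le> card {1..t}" by (intro card_mono) auto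
  then show ?thesis by (simp add: Ssum_def)
qed

lemma Ssum_nonneg: "0 \<le> Ssum t x"
  by (simp add: Ssum_def)

lemma measurable_Ssum_real [measurable]:
  "(\<lambda>x. real_of_int (Ssum t x)) \<in> borel_measurable (Bern_seq r)"
  unfolding Ssum_eq_sum by measurable

lemma measurable_Ssum [measurable]: "Ssum t \<in> measurable (Bern_seq r) (count_space UNIV)"
proof (subst measurable_count_space_eq2_countable, safe)
  fix k :: int
  have "Ssum t -` {k} \<inter> space (Bern_seq r) =
      {x \<in> space (Bern_seq r). real_of_int (Ssum t x) = real_of_int k}"
    by auto
  also have "\<dots> \<in> sets (Bern_seq r)" by measurable
  finally show "Ssum t -` {k} \<inter> space (Bern_seq r) \<in> sets (Bern_seq r)" .
qed auto

lemma sets_Bern_seq_Ssum: "{x. P (Ssum t x)} \<in> sets (Bern_seq r)"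
  using measurable_sets[OF measurable_Ssum, of "{k. P k}" t r] by (simp add: vimage_def)

lemma sets_Bern_seq_Collect: "Measurable.pred (Bern_seq r) P \<Longrightarrow> {x. P x} \<in> sets (Bern_seq r)"
  by (simp add: pred_def)

lemma distr_Bern_seq_component:
  "distr (Bern_seq r) (count_space UNIV) (\<lambda>x. x i) = measure_pmf (bernoulli_pmf r)"
proof -
  interpret product_prob_space "\<lambda>_::nat. measure_pmf (bernoulli_pmf r)" UNIV
    by (intro product_prob_spaceI) (simp add: measure_pmf.prob_space_axioms)
  have "distr (Bern_seq r) (count_space UNIV) (\<lambda>x. x i) =
      distr (Bern_seq r) (measure_pmf (bernoulli_pmf r)) (\<lambda>x. x i)"
    by (rule distr_cong) auto
  also have "\<dots> = measure_pmf (bernoulli_pmf r)"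
    unfolding Bern_seq_def by (rule PiM_component) simp
  finally show ?thesis .
qed

lemma indep_vars_Bern_seq:
  assumes "I \<noteq> {}" "finite I"
  shows "prob_space.indep_vars (Bern_seq r) (\<lambda>_. borel) (\<lambda>i x. if x i then 1 else (0::real)) I"
proof -
  interpret BP: prob_space "Bern_seq r" by (rule prob_space_Bern_seq)
  interpret product_prob_space "\<lambda>_::nat. measure_pmf (bernoulli_pmf r)" UNIV
    by (intro product_prob_spaceI) (simp add: measure_pmf.prob_space_axioms)
  have rv: "(\<lambda>x. x i) \<in> measurable (Bern_seq r) (count_space UNIV)" for i
    by measurable
  have "BP.indep_vars (\<lambda>_. count_space UNIV) (\<lambda>i x. x i) I"
  proof (subst BP.indep_vars_iff_distr_eq_PiM'[OF assms(1) rv])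
    have "distr (Bern_seq r) (Pi\<^sub>M I (\<lambda>i. count_space UNIV)) (\<lambda>x. restrict x I) =
        distr (PiM UNIV (\<lambda>_. measure_pmf (bernoulli_pmf r))) (Pi\<^sub>M I (\<lambda>i. measure_pmf (bernoulli_pmf r)))
          (\<lambda>x. restrict x I)"
      unfolding Bern_seq_def by (rule distr_cong) (auto intro!: sets_PiM_cong)
    also have "\<dots> = Pi\<^sub>M I (\<lambda>i. measure_pmf (bernoulli_pmf r))"
      by (rule distr_PiM_restrict_finite) (use assms in auto)
    finally show "distr (Bern_seq r) (Pi\<^sub>M I (\<lambda>i. count_space UNIV)) (\<lambda>x. \<lambda>i\<in>I. x i) =
        Pi\<^sub>M I (\<lambda>i. distr (Bern_seq r) (count_space UNIV) (\<lambda>x. x i))"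
      by (simp add: distr_Bern_seq_component)
  qed
  then show ?thesis
    by (rule BP.indep_vars_compose2) auto
qed

lemma Ssum_Hoeffding:
  assumes r: "0 \<le> r" "r \<le> 1" and "t \<ge> 1" and w: "w \<ge> 0"
  shows "measure (Bern_seq r) {x. real_of_int (Ssum t x) \<ge> r * t + w} \<le> exp (-2 * w\<^sup>2 / t)"
    and "measure (Bern_seq r) {x. real_of_int (Ssum t x) \<le> r * t - w} \<le> exp (-2 * w\<^sup>2 / t)"
proof -
  interpret BP: prob_space "Bern_seq r" by (rule prob_space_Bern_seq)
  define X :: "nat \<Rightarrow> (nat \<Rightarrow> bool) \<Rightarrow> real" where "X = (\<lambda>i x. if x i then 1 else 0)"
  have distr_X: "distr (Bern_seq r) borel (X i) =
      distr (measure_pmf (bernoulli_pmf r)) borel (\<lambda>b. if b then 1 else 0)" for i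
  proof -
    have "distr (Bern_seq r) borel (X i) =
        distr (distr (Bern_seq r) (count_space UNIV) (\<lambda>x. x i)) borel (\<lambda>b. if b then 1 else 0)"
      unfolding X_def by (subst distr_distr) (auto simp: o_def)
    then show ?thesis by (simp add: distr_Bern_seq_component)
  qed
  have "BP.expectation (X 1) = integral\<^sup>L (distr (Bern_seq r) borel (X 1)) (\<lambda>x. x)"
    unfolding X_def by (subst integral_distr) auto
  also have "\<dots> = r"
    unfolding distr_X by (subst integral_distr) (use r in auto)
  finally have expectation_X: "BP.expectation (X 1) = r" .
  interpret H: Hoeffding_ineq_iid "Bern_seq r" "{1..t}" X "X 1" 0 1 r
  proof unfold_locales
    show "BP.indep_vars (\<lambda>_. borel) X {1..t}"
      unfolding X_def by (rule indep_vars_Bern_seq) (use \<open>t \<ge> 1\<close> in auto)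
    show "distr (Bern_seq r) borel (X i) = distr (Bern_seq r) borel (X 1)" for i
      by (simp only: distr_X)
    show "X 1 \<in> borel_measurable (Bern_seq r)"
      unfolding X_def by measurable
    show "r \<equiv> BP.expectation (X 1)"
      using expectation_X by simp
  qed (auto simp: X_def)
  have sum_X: "(\<Sum>i\<in>{1..t}. X i x) = real_of_int (Ssum t x)" for x
    by (simp add: Ssum_eq_sum X_def)
  have "{1..t} \<noteq> {}" using \<open>t \<ge> 1\<close> by auto
  then show "measure (Bern_seq r) {x. real_of_int (Ssum t x) \<ge> r * t + w} \<le> exp (-2 * w\<^sup>2 / t)"
    and "measure (Bern_seq r) {x. real_of_int (Ssum t x) \<le> r * t - w} \<le> exp (-2 * w\<^sup>2 / t)"
    using H.Hoeffding_ineq_ge[OF w] H.Hoeffding_ineq_le[OF w] unfolding sum_X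
    by (simp_all add: mult.commute)
qed

lemma measurable_emeasure_bernoulli_pmf:
  "(\<lambda>r. emeasure (measure_pmf (bernoulli_pmf r)) X) \<in> borel_measurable borel"
proof -
  define f :: "real \<Rightarrow> real" where
    "f r = (\<Sum>b\<in>X. if b then min 1 (max 0 r) else 1 - min 1 (max 0 r))" for r
  have "continuous_on UNIV (\<lambda>r::real. if b then min 1 (max 0 r) else 1 - min 1 (max 0 r))" for b
    by (cases b) (auto intro!: continuous_intros)
  then have "continuous_on UNIV f"
    unfolding f_def by (intro continuous_on_sum) auto
  moreover have "emeasure (measure_pmf (bernoulli_pmf r)) X = ennreal (f r)" for r
    by (simp add: f_def measure_pmf.emeasure_eq_measure measure_measure_pmf_finite
        bernoulli_pmf.rep_eq)
  ultimately show ?thesis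
    by (simp add: borel_measurable_continuous_onI measurable_compose[OF _ measurable_ennreal])
qed

lemma measurable_Bern_seq:
  "Bern_seq \<in> measurable borel (subprob_algebra (PiM UNIV (\<lambda>_::nat. count_space (UNIV::bool set))))"
proof (rule measurable_subprob_algebra_generated[where \<Omega>=UNIV and
      G="prod_algebra UNIV (\<lambda>_::nat. count_space (UNIV::bool set))"])
  show "sets (PiM UNIV (\<lambda>_::nat. count_space (UNIV::bool set))) =
      sigma_sets UNIV (prod_algebra UNIV (\<lambda>_::nat. count_space (UNIV::bool set)))"
    by (simp add: sets_PiM)
  show "Int_stable (prod_algebra UNIV (\<lambda>_::nat. count_space (UNIV::bool set)))"
    by (rule Int_stable_prod_algebra)
  show "subprob_space (Bern_seq a)" for a
    using prob_space_Bern_seq by (rule prob_space_imp_subprob_space)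
  show "(\<lambda>a. emeasure (Bern_seq a) UNIV) \<in> borel_measurable borel"
    using prob_space.emeasure_space_1[OF prob_space_Bern_seq] by simp
  fix A assume "A \<in> prod_algebra UNIV (\<lambda>_::nat. count_space (UNIV::bool set))"
  then obtain J E where A: "A = prod_emb UNIV (\<lambda>_::nat. count_space UNIV) J (PiE J E)" "finite J"
    by (auto elim!: prod_algebraE)
  have "emeasure (Bern_seq a) A = (\<Prod>j\<in>J. emeasure (measure_pmf (bernoulli_pmf a)) (E j))" for a
  proof -
    interpret product_prob_space "\<lambda>_::nat. measure_pmf (bernoulli_pmf a)" UNIV
      by (intro product_prob_spaceI) (simp add: measure_pmf.prob_space_axioms)
    have "A = prod_emb UNIV (\<lambda>_::nat. measure_pmf (bernoulli_pmf a)) J (PiE J E)"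
      unfolding A by (simp add: prod_emb_def)
    then show ?thesis
      unfolding Bern_seq_def using emeasure_PiM_emb[of J E] A(2) by simp
  qed
  then show "(\<lambda>a. emeasure (Bern_seq a) A) \<in> borel_measurable borel"
    by (simp add: borel_measurable_prod_ennreal measurable_emeasure_bernoulli_pmf)
qed (auto simp: sets_Bern_seq)

lemma measurable_arm_kernel:
  assumes "sets \<mu> = sets borel"
  shows "(\<lambda>r. return borel r \<Otimes>\<^sub>M Bern_seq r) \<in>
    measurable \<mu> (subprob_algebra (borel \<Otimes>\<^sub>M PiM UNIV (\<lambda>_::nat. count_space (UNIV::bool set))))"
  unfolding measurable_cong_sets[OF assms refl]
  by (intro measurable_pair_measure return_measurable measurable_Bern_seq)

lemma prob_space_arm_law:
  assumes "prob_space \<mu>" "sets \<mu> = sets borel"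
  shows "prob_space (arm_law \<mu>)"
  unfolding arm_law_def
proof (rule prob_space.prob_space_bind[OF assms(1) _ measurable_arm_kernel[OF assms(2)]])
  show "AE x in \<mu>. prob_space (return borel x \<Otimes>\<^sub>M Bern_seq x)"
    by (intro AE_I2 prob_space_pair prob_space_return prob_space_Bern_seq) simp
qed

lemma sets_arm_law:
  assumes "prob_space \<mu>" "sets \<mu> = sets borel"
  shows "sets (arm_law \<mu>) = sets (borel \<Otimes>\<^sub>M PiM UNIV (\<lambda>_::nat. count_space (UNIV::bool set)))"
  unfolding arm_law_def
  by (rule sets_bind[OF _ prob_space.not_empty[OF assms(1)]])
    (auto intro!: sets_pair_measure_cong sets_Bern_seq)

lemma emeasure_arm_law_Times:
  assumes "prob_space \<mu>" "sets \<mu> = sets borel" and A: "A \<in> sets (Bern_seq 0)"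
  shows "emeasure (arm_law \<mu>) (UNIV \<times> A) = (\<integral>\<^sup>+ r. emeasure (Bern_seq r) A \<partial>\<mu>)"
proof -
  have "emeasure (arm_law \<mu>) (UNIV \<times> A) =
      (\<integral>\<^sup>+ r. emeasure (return borel r \<Otimes>\<^sub>M Bern_seq r) (UNIV \<times> A) \<partial>\<mu>)"
    unfolding arm_law_def
    using A by (intro emeasure_bind[OF prob_space.not_empty[OF assms(1)] measurable_arm_kernel[OF assms(2)]])
      (simp_all add: sets_Bern_seq)
  also have "\<dots> = (\<integral>\<^sup>+ r. emeasure (Bern_seq r) A \<partial>\<mu>)"
  proof (intro nn_integral_cong)
    fix r
    interpret prob_space "Bern_seq r" by (rule prob_space_Bern_seq)
    have "emeasure (return borel r \<Otimes>\<^sub>M Bern_seq r) (UNIV \<times> A) =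
        emeasure (return borel r) UNIV * emeasure (Bern_seq r) A"
      using A by (intro emeasure_pair_measure_Times) (auto simp: sets_Bern_seq)
    then show "emeasure (return borel r \<Otimes>\<^sub>M Bern_seq r) (UNIV \<times> A) = emeasure (Bern_seq r) A"
      by simp
  qed
  finally show ?thesis .
qed

lemma space_arm_law:
  assumes "prob_space \<mu>" "sets \<mu> = sets borel"
  shows "space (arm_law \<mu>) = UNIV"
  using sets_eq_imp_space_eq[OF sets_arm_law[OF assms]] by (simp add: space_pair_measure space_PiM)

section \<open>Stopping times\<close>

lemma stop_time_eq_enat_iff:
  "stop_time B x = enat s \<longleftrightarrow>
     1 \<le> s \<and> crosses B x s \<and> (\<forall>s'. 1 \<le> s' \<and> s' < s \<longrightarrow> \<not> crosses B x s')"
proof (cases "\<exists>s\<ge>1. crosses B x s")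
  case True
  define m where "m = (LEAST s. 1 \<le> s \<and> crosses B x s)"
  have m: "1 \<le> m" "crosses B x m"
    using LeastI_ex[of "\<lambda>s. 1 \<le> s \<and> crosses B x s"] True unfolding m_def by auto
  have m_least: "m \<le> s'" if "1 \<le> s'" "crosses B x s'" for s'
    unfolding m_def using that by (simp add: Least_le)
  have "stop_time B x = enat m"
    using True by (simp add: stop_time_def m_def)
  then show ?thesis
    using m m_least by (auto simp: not_less) (meson le_antisym not_le)+
qed (auto simp: stop_time_def)

lemma enat_le_stop_time_iff:
  "enat t \<le> stop_time B x \<longleftrightarrow> (\<forall>s. 1 \<le> s \<and> s < t \<longrightarrow> \<not> crosses B x s)"
proof (cases "stop_time B x")
  case (enat m)
  then have m: "1 \<le> m" "crosses B x m" "\<And>s. 1 \<le> s \<Longrightarrow> s < m \<Longrightarrow> \<not> crosses B x s"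
    by (auto simp: stop_time_eq_enat_iff)
  show ?thesis
  proof
    assume "enat t \<le> stop_time B x"
    then show "\<forall>s. 1 \<le> s \<and> s < t \<longrightarrow> \<not> crosses B x s"
      using enat m(3) by auto
  next
    assume "\<forall>s. 1 \<le> s \<and> s < t \<longrightarrow> \<not> crosses B x s"
    then show "enat t \<le> stop_time B x"
      using enat m(1,2) by (auto simp: not_less[symmetric])
  qed
next
  case infinity
  then show ?thesis
    by (auto simp: stop_time_def split: if_splits)
qed

lemma enat_less_stop_time_iff:
  "enat t < stop_time B x \<longleftrightarrow> (\<forall>s. 1 \<le> s \<and> s \<le> t \<longrightarrow> \<not> crosses B x s)"
  unfolding Suc_ile_eq[symmetric] enat_le_stop_time_iff by (simp add: less_Suc_eq_le)

lemma enat_le_stop_time_cong: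
  "(\<And>s. 1 \<le> s \<Longrightarrow> s < t \<Longrightarrow> B s = B' s) \<Longrightarrow>
    enat t \<le> stop_time B x \<longleftrightarrow> enat t \<le> stop_time B' x"
  unfolding enat_le_stop_time_iff crosses_def by auto

lemma stop_time_eq_enat_cong:
  "(\<And>s'. 1 \<le> s' \<Longrightarrow> s' \<le> s \<Longrightarrow> B s' = B' s') \<Longrightarrow>
    stop_time B x = enat s \<longleftrightarrow> stop_time B' x = enat s"
  unfolding stop_time_eq_enat_iff crosses_def by auto

lemma measurable_crosses [measurable]: "Measurable.pred (Bern_seq r) (\<lambda>x. crosses B x s)"
  unfolding crosses_def by measurable

lemma measurable_enat_le_stop_time [measurable]:
  "Measurable.pred (Bern_seq r) (\<lambda>x. enat t \<le> stop_time B x)"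
proof -
  have "(\<lambda>x. enat t \<le> stop_time B x) = (\<lambda>x. \<forall>s\<in>{1..<t}. \<not> crosses B x s)"
    by (auto simp: enat_le_stop_time_iff)
  then show ?thesis by simp
qed

lemma measurable_enat_less_stop_time [measurable]:
  "Measurable.pred (Bern_seq r) (\<lambda>x. enat t < stop_time B x)"
proof -
  have "(\<lambda>x. enat t < stop_time B x) = (\<lambda>x. \<forall>s\<in>{1..t}. \<not> crosses B x s)"
    by (auto simp: enat_less_stop_time_iff)
  then show ?thesis by simp
qed

lemma measurable_stop_time_eq_enat [measurable]:
  "Measurable.pred (Bern_seq r) (\<lambda>x. stop_time B x = enat s)"
proof -
  have "(\<lambda>x. stop_time B x = enat s) =
      (\<lambda>x. 1 \<le> s \<and> crosses B x s \<and> (\<forall>s'\<in>{1..<s}. \<not> crosses B x s'))"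
    by (auto simp: stop_time_eq_enat_iff)
  then show ?thesis by simp
qed

lemma sets_stop_time [measurable]:
  "{x. enat t \<le> stop_time B x} \<in> sets (Bern_seq r)"
  "{x. enat t < stop_time B x} \<in> sets (Bern_seq r)"
  by (intro sets_Bern_seq_Collect; measurable)+

lemma arm_survival_event:
  assumes "prob_space \<mu>" "sets \<mu> = sets borel"
  shows "{x \<in> space (arm_law \<mu>). enat t < stop_time B (snd x)} = UNIV \<times> {x. enat t < stop_time B x}"
  using space_arm_law[OF assms] by auto

lemma sets_arm_survival_event:
  assumes "prob_space \<mu>" "sets \<mu> = sets borel"
  shows "{x \<in> space (arm_law \<mu>). enat t < stop_time B (snd x)} \<in> sets (arm_law \<mu>)"
  unfolding arm_survival_event[OF assms] sets_arm_law[OF assms]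
  using sets_stop_time(2)[of t B 0] by (intro pair_measureI) (auto simp: sets_Bern_seq)

section \<open>Stopping boundaries\<close>

lemma LeastI_int_bounded_below:
  fixes P :: "int \<Rightarrow> bool"
  assumes "P j0" and lb: "\<And>j. P j \<Longrightarrow> lb \<le> j"
  shows "P (LEAST j. P j) \<and> (LEAST j. P j) \<le> j0"
proof -
  let ?S = "{j \<in> {lb..j0}. P j}"
  have S: "finite ?S" "j0 \<in> ?S"
    using assms by (auto intro: finite_subset[of _ "{lb..j0}"])
  then have min: "Min ?S \<in> ?S" "Min ?S \<le> j0"
    using Min_in[OF S(1)] Min_le[OF S] by blast+
  have "(LEAST j. P j) = Min ?S"
  proof (rule Least_equality)
    show "Min ?S \<le> j" if "P j" for j
      using that lb Min_le[OF S(1), of j] min(2) by (cases "j \<le> j0") auto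
  qed (use min in auto)
  with min show ?thesis by auto
qed

lemma GreatestI_int_bounded_above:
  fixes P :: "int \<Rightarrow> bool"
  assumes "P j0" and ub: "\<And>j. P j \<Longrightarrow> j \<le> ub"
  shows "P (GREATEST j. P j) \<and> j0 \<le> (GREATEST j. P j)"
proof -
  let ?S = "{j \<in> {j0..ub}. P j}"
  have S: "finite ?S" "j0 \<in> ?S"
    using assms by (auto intro: finite_subset[of _ "{j0..ub}"])
  then have max: "Max ?S \<in> ?S" "j0 \<le> Max ?S"
    using Max_in[OF S(1)] Max_ge[OF S] by blast+
  have "(GREATEST j. P j) = Max ?S"
  proof (rule Greatest_equality)
    show "j \<le> Max ?S" if "P j" for j
      using that ub Max_ge[OF S(1), of j] max(2) by (cases "j0 \<le> j") auto
  qed (use max in auto)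
  with max show ?thesis by auto
qed

lemma bnd_eq_boundaries: "s \<le> n \<Longrightarrow> bnd a e n s = boundaries a e s"
proof (induction n)
  case (Suc n)
  show ?case
  proof (cases "s = Suc n")
    case False
    with Suc show ?thesis by (simp add: Let_def)
  qed (simp add: boundaries_def)
qed (simp add: boundaries_def)

definition upper_exit :: "real \<Rightarrow> (nat \<Rightarrow> real) \<Rightarrow> nat \<Rightarrow> (nat \<Rightarrow> bool) set" where
  "upper_exit a e t =
     {x. \<exists>s. stop_time (boundaries a e) x = enat s \<and> s < t \<and> Ssum s x \<ge> fst (boundaries a e s)}"

definition lower_exit :: "real \<Rightarrow> (nat \<Rightarrow> real) \<Rightarrow> nat \<Rightarrow> (nat \<Rightarrow> bool) set" where
  "lower_exit a e t =
     {x. \<exists>s. stop_time (boundaries a e) x = enat s \<and> s < t \<and> Ssum s x \<le> snd (boundaries a e s)}"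

definition alive_ge :: "real \<Rightarrow> (nat \<Rightarrow> real) \<Rightarrow> nat \<Rightarrow> int \<Rightarrow> (nat \<Rightarrow> bool) set" where
  "alive_ge a e t j = {x. enat t \<le> stop_time (boundaries a e) x \<and> Ssum t x \<ge> j}"

definition alive_le :: "real \<Rightarrow> (nat \<Rightarrow> real) \<Rightarrow> nat \<Rightarrow> int \<Rightarrow> (nat \<Rightarrow> bool) set" where
  "alive_le a e t j = {x. enat t \<le> stop_time (boundaries a e) x \<and> Ssum t x \<le> j}"

lemma sets_boundary_events [measurable]:
  "upper_exit a e t \<in> sets (Bern_seq r)" "lower_exit a e t \<in> sets (Bern_seq r)"
  "alive_ge a e t j \<in> sets (Bern_seq r)" "alive_le a e t j \<in> sets (Bern_seq r)"
  unfolding upper_exit_def lower_exit_def alive_ge_def alive_le_def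
  by (intro sets_Bern_seq_Collect; measurable)+

definition upper_admissible :: "real \<Rightarrow> (nat \<Rightarrow> real) \<Rightarrow> nat \<Rightarrow> int \<Rightarrow> bool" where
  "upper_admissible a e t j \<longleftrightarrow>
     1 \<le> j \<and> measure (Bern_seq a) (alive_ge a e t j) + measure (Bern_seq a) (upper_exit a e t) \<le> e t"

definition lower_admissible :: "real \<Rightarrow> (nat \<Rightarrow> real) \<Rightarrow> nat \<Rightarrow> int \<Rightarrow> bool" where
  "lower_admissible a e t j \<longleftrightarrow>
     measure (Bern_seq a) (alive_le a e t j) + measure (Bern_seq a) (lower_exit a e t) \<le> e t"

lemma boundaries_Suc:
  "boundaries a e (Suc n) =
     (LEAST j. upper_admissible a e (Suc n) j, GREATEST j. lower_admissible a e (Suc n) j)"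
proof -
  let ?B = "bnd a e n"
  have agree: "?B s = boundaries a e s" if "s < Suc n" for s
    using that by (simp add: bnd_eq_boundaries)
  have stop_eq: "stop_time ?B x = enat s \<longleftrightarrow> stop_time (boundaries a e) x = enat s"
    if "s < Suc n" for x s
    using that by (intro stop_time_eq_enat_cong) (simp add: agree)
  have alive: "enat (Suc n) \<le> stop_time ?B x \<longleftrightarrow> enat (Suc n) \<le> stop_time (boundaries a e) x" for x
    by (intro enat_le_stop_time_cong) (simp add: agree)
  have "{x \<in> space (Bern_seq a). \<exists>s. stop_time ?B x = enat s \<and> s < Suc n \<and> Ssum s x \<ge> fst (?B s)} =
      upper_exit a e (Suc n)"
    by (auto simp: upper_exit_def stop_eq agree) (metis agree stop_eq)
  moreover have "{x \<in> space (Bern_seq a). \<exists>s. stop_time ?B x = enat s \<and> s < Suc n \<and> Ssum s x \<le> snd (?B s)} =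
      lower_exit a e (Suc n)"
    by (auto simp: lower_exit_def stop_eq agree) (metis agree stop_eq)
  ultimately show ?thesis
    unfolding boundaries_def[of a e "Suc n"] bnd.simps(2) Let_def
    by (simp add: alive alive_ge_def alive_le_def upper_admissible_def lower_admissible_def)
qed

lemma upper_exit_Suc_0: "upper_exit a e (Suc 0) = {}"
  and lower_exit_Suc_0: "lower_exit a e (Suc 0) = {}"
  by (auto simp: upper_exit_def lower_exit_def stop_time_eq_enat_iff)

lemma upper_exit_Suc_subset:
  "upper_exit a e (Suc t) \<subseteq> upper_exit a e t \<union> alive_ge a e t (fst (boundaries a e t))"
  unfolding upper_exit_def alive_ge_def by (auto simp: less_Suc_eq)

lemma lower_exit_Suc_subset:
  "lower_exit a e (Suc t) \<subseteq> lower_exit a e t \<union> alive_le a e t (snd (boundaries a e t))"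
  unfolding lower_exit_def alive_le_def by (auto simp: less_Suc_eq)

lemma alive_ge_empty: "int t < j \<Longrightarrow> alive_ge a e t j = {}"
  by (auto simp: alive_ge_def) (meson Ssum_le leD order_trans)

lemma alive_le_empty: "j < 0 \<Longrightarrow> alive_le a e t j = {}"
  by (auto simp: alive_le_def) (meson Ssum_nonneg leD order_trans)

lemma alive_le_above: "int t \<le> j \<Longrightarrow> alive_le a e t j = {x. enat t \<le> stop_time (boundaries a e) x}"
  unfolding alive_le_def using Ssum_le[of t] by (auto intro: order_trans)

lemma alive_or_exited:
  "UNIV = {x. enat t \<le> stop_time (boundaries a e) x} \<union> upper_exit a e t \<union> lower_exit a e t"
proof -
  have "x \<in> upper_exit a e t \<union> lower_exit a e t" if "\<not> enat t \<le> stop_time (boundaries a e) x" for x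
  proof -
    obtain s where s: "stop_time (boundaries a e) x = enat s" "s < t"
      using \<open>\<not> enat t \<le> _\<close> by (cases "stop_time (boundaries a e) x") auto
    then have "crosses (boundaries a e) x s"
      by (simp add: stop_time_eq_enat_iff)
    with s show ?thesis
      unfolding upper_exit_def lower_exit_def crosses_def by auto
  qed
  then show ?thesis by blast
qed

lemma measure_alive_or_exited:
  "1 \<le> measure (Bern_seq a) {x. enat t \<le> stop_time (boundaries a e) x}
       + measure (Bern_seq a) (upper_exit a e t) + measure (Bern_seq a) (lower_exit a e t)"
proof -
  interpret prob_space "Bern_seq a" by (rule prob_space_Bern_seq)
  have "1 = measure (Bern_seq a)
      ({x. enat t \<le> stop_time (boundaries a e) x} \<union> upper_exit a e t \<union> lower_exit a e t)"
    using prob_space by (simp flip: alive_or_exited)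
  also have "\<dots> \<le> measure (Bern_seq a) {x. enat t \<le> stop_time (boundaries a e) x}
      + measure (Bern_seq a) (upper_exit a e t) + measure (Bern_seq a) (lower_exit a e t)"
    by (intro order_trans[OF measure_Un_le] add_mono measure_Un_le order_refl)
      (auto simp: sets_stop_time)
  finally show ?thesis .
qed

locale quarter_spending =
  fixes a :: real and e :: "nat \<Rightarrow> real"
  assumes spending_nonneg: "0 \<le> e 0"
    and spending_mono: "incseq e"
    and spending_le_quarter: "\<And>t. e t \<le> 1/4"
begin

abbreviation "Pa \<equiv> measure (Bern_seq a)"
abbreviation "U t \<equiv> fst (boundaries a e t)"
abbreviation "L t \<equiv> snd (boundaries a e t)"

text \<open>The spending bound \<open>1/4\<close> keeps the greatest admissible lower boundary finite:
  a lower boundary above \<open>t\<close> would put all surviving paths into the lower rejection region.\<close>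

lemma lower_admissible_le:
  assumes "Pa (upper_exit a e t) \<le> 1/4" and "lower_admissible a e t j"
  shows "j \<le> int t"
proof (rule ccontr)
  assume "\<not> j \<le> int t"
  then have "Pa {x. enat t \<le> stop_time (boundaries a e) x} + Pa (lower_exit a e t) \<le> 1/4"
    using assms(2) spending_le_quarter[of t] by (simp add: lower_admissible_def alive_le_above)
  with assms(1) measure_alive_or_exited[of a t e] show False by linarith
qed

lemma upper_admissible_ge_1: "upper_admissible a e t j \<Longrightarrow> 1 \<le> j"
  by (simp add: upper_admissible_def)

lemma upper_boundary_le: "upper_admissible a e (Suc n) j \<Longrightarrow> U (Suc n) \<le> j"
  using LeastI_int_bounded_below[of "upper_admissible a e (Suc n)" j 1] upper_admissible_ge_1
  by (simp add: boundaries_Suc)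

lemma upper_boundary_admissible:
  assumes "Pa (upper_exit a e (Suc n)) \<le> e (Suc n)"
  shows "upper_admissible a e (Suc n) (U (Suc n))"
proof -
  have "upper_admissible a e (Suc n) (int (Suc n) + 1)"
    using assms by (simp add: upper_admissible_def alive_ge_empty)
  then have "upper_admissible a e (Suc n) (LEAST j. upper_admissible a e (Suc n) j)"
    using LeastI_int_bounded_below[of "upper_admissible a e (Suc n)" _ 1] upper_admissible_ge_1
    by blast
  then show ?thesis by (simp add: boundaries_Suc)
qed

lemma lower_boundary_admissible:
  assumes "Pa (upper_exit a e (Suc n)) \<le> 1/4" and "Pa (lower_exit a e (Suc n)) \<le> e (Suc n)"
  shows "lower_admissible a e (Suc n) (L (Suc n))"
proof -
  have "lower_admissible a e (Suc n) (-1)"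
    using assms(2) by (simp add: lower_admissible_def alive_le_empty)
  then show ?thesis
    using GreatestI_int_bounded_above[of "lower_admissible a e (Suc n)" "-1"]
      lower_admissible_le[OF assms(1)] by (auto simp: boundaries_Suc)
qed

lemma exit_probabilities_le: "Pa (upper_exit a e (Suc t)) \<le> e t \<and> Pa (lower_exit a e (Suc t)) \<le> e t"
proof (induction t)
  case 0
  then show ?case
    using spending_nonneg by (simp add: upper_exit_Suc_0 lower_exit_Suc_0)
next
  case (Suc t)
  interpret prob_space "Bern_seq a" by (rule prob_space_Bern_seq)
  have "e t \<le> e (Suc t)"
    using spending_mono by (simp add: incseq_SucD)
  with Suc.IH have up: "Pa (upper_exit a e (Suc t)) \<le> e (Suc t)"
    and lo: "Pa (lower_exit a e (Suc t)) \<le> e (Suc t)"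
    by auto
  have "Pa (upper_exit a e (Suc (Suc t))) \<le> Pa (upper_exit a e (Suc t)) + Pa (alive_ge a e (Suc t) (U (Suc t)))"
    by (intro order_trans[OF finite_measure_mono[OF upper_exit_Suc_subset] measure_Un_le]) auto
  also have "\<dots> \<le> e (Suc t)"
    using upper_boundary_admissible[OF up] by (simp add: upper_admissible_def)
  finally have "Pa (upper_exit a e (Suc (Suc t))) \<le> e (Suc t)" .
  moreover have "Pa (lower_exit a e (Suc (Suc t))) \<le> Pa (lower_exit a e (Suc t)) + Pa (alive_le a e (Suc t) (L (Suc t)))"
    by (intro order_trans[OF finite_measure_mono[OF lower_exit_Suc_subset] measure_Un_le]) auto
  moreover have "\<dots> \<le> e (Suc t)"
    using lower_boundary_admissible[OF _ lo] Suc.IH spending_le_quarter[of t]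
    by (simp add: lower_admissible_def)
  ultimately show ?case by linarith
qed

lemma upper_exit_le_quarter: "Pa (upper_exit a e (Suc n)) \<le> 1/4"
  using exit_probabilities_le[of n] spending_le_quarter[of n] by linarith

lemma lower_boundary_ge: "lower_admissible a e (Suc n) j \<Longrightarrow> j \<le> L (Suc n)"
  using GreatestI_int_bounded_above[of "lower_admissible a e (Suc n)" j]
    lower_admissible_le[OF upper_exit_le_quarter] by (auto simp: boundaries_Suc)

end

section \<open>Survival of a single arm\<close>

lemma eventually_radius_conditions:
  fixes q lam \<gamma> \<beta> d :: real
  assumes "0 < q" "0 < lam" "0 < \<gamma>" "\<gamma> < 1/2" "0 < \<beta>" "0 < d"
  shows "eventually (\<lambda>t. 1 \<le> t \<and> t powr -\<gamma> < d \<and> 0 \<le> ln (t powr q / lam)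
      \<and> sqrt (t/2 * ln (t powr q / lam)) + 1 \<le> t powr -\<gamma> * t
      \<and> exp (-2 * (t powr -\<gamma> * t - sqrt (t/2 * ln (t powr q / lam)) - 1)\<^sup>2 / t) \<le> t powr -\<beta>)
    at_top"
  using assms by (intro eventually_conj; real_asymp)

lemma measure_near_le_Holder:
  fixes \<mu> :: "real measure"
  assumes "prob_space \<mu>" "sets \<mu> = sets borel"
    and "lo < a - \<delta>" "a + \<delta> < hi" "0 < \<delta>"
    and Holder: "\<forall>x\<in>{lo<..<hi}. \<forall>y\<in>{lo<..<hi}. \<bar>measure \<mu> {..x} - measure \<mu> {..y}\<bar> \<le> c * \<bar>x - y\<bar> powr \<xi>"
  shows "measure \<mu> {r. \<bar>r - a\<bar> < \<delta>} \<le> c * (2 * \<delta>) powr \<xi>"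
proof -
  interpret prob_space \<mu> by fact
  have "measure \<mu> {r. \<bar>r - a\<bar> < \<delta>} \<le> measure \<mu> ({..a + \<delta>} - {..a - \<delta>})"
    using assms(2) by (intro finite_measure_mono) auto
  also have "\<dots> = measure \<mu> {..a + \<delta>} - measure \<mu> {..a - \<delta>}"
    using assms(2,5) by (intro finite_measure_Diff) auto
  also have "\<dots> \<le> c * \<bar>(a + \<delta>) - (a - \<delta>)\<bar> powr \<xi>"
    using Holder[rule_format, of "a + \<delta>" "a - \<delta>"] assms(3-5) by simp
  also have "\<bar>(a + \<delta>) - (a - \<delta>)\<bar> = 2 * \<delta>"
    using assms(5) by simp
  finally show ?thesis .
qed

lemma exp_Hoeffding_radius:
  fixes t q lam :: real
  assumes "0 < t" "0 < lam" "0 \<le> ln (t powr q / lam)"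
  shows "exp (-2 * (sqrt (t/2 * ln (t powr q / lam)))\<^sup>2 / t) = lam * t powr (-q)"
proof -
  have "-2 * (sqrt (t/2 * ln (t powr q / lam)))\<^sup>2 / t = - ln (t powr q / lam)"
    using assms by simp
  then show ?thesis
    using assms by (simp add: exp_minus powr_minus_divide)
qed

context quarter_spending
begin

lemma boundaries_Hoeffding:
  assumes a: "0 \<le> a" "a \<le> 1" and w: "w \<ge> 0"
    and spent: "exp (-2 * w\<^sup>2 / real (Suc n)) \<le> e (Suc n) - e n"
  shows "real_of_int (U (Suc n)) \<le> a * real (Suc n) + w + 1"
    and "a * real (Suc n) - w - 1 \<le> real_of_int (L (Suc n))"
proof -
  interpret prob_space "Bern_seq a" by (rule prob_space_Bern_seq)
  let ?t = "Suc n"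
  have exits: "Pa (upper_exit a e ?t) \<le> e n" "Pa (lower_exit a e ?t) \<le> e n"
    using exit_probabilities_le[of n] by auto
  define j where "j = max 1 \<lceil>a * ?t + w\<rceil>"
  have "alive_ge a e ?t j \<subseteq> {x. a * ?t + w \<le> real_of_int (Ssum ?t x)}"
    unfolding alive_ge_def j_def by auto linarith
  then have "Pa (alive_ge a e ?t j) \<le> Pa {x. a * ?t + w \<le> real_of_int (Ssum ?t x)}"
    using sets_Bern_seq_Ssum[where P="\<lambda>k. a * ?t + w \<le> real_of_int k"]
    by (intro finite_measure_mono) auto
  also have "\<dots> \<le> exp (-2 * w\<^sup>2 / ?t)"
    using Ssum_Hoeffding(1)[OF a _ w, of ?t] by simp
  finally have "upper_admissible a e ?t j"
    using exits spent by (simp add: upper_admissible_def j_def)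
  then have "U ?t \<le> j"
    by (rule upper_boundary_le)
  moreover have "a * ?t + w \<ge> 0"
    using a w by simp
  ultimately show "real_of_int (U ?t) \<le> a * ?t + w + 1"
    unfolding j_def using ceiling_correct[of "a * ?t + w"] by linarith
  define k where "k = \<lfloor>a * ?t - w\<rfloor>"
  have "alive_le a e ?t k \<subseteq> {x. real_of_int (Ssum ?t x) \<le> a * ?t - w}"
    unfolding alive_le_def k_def by auto linarith
  then have "Pa (alive_le a e ?t k) \<le> Pa {x. real_of_int (Ssum ?t x) \<le> a * ?t - w}"
    using sets_Bern_seq_Ssum[where P="\<lambda>k. real_of_int k \<le> a * ?t - w"]
    by (intro finite_measure_mono) auto
  also have "\<dots> \<le> exp (-2 * w\<^sup>2 / ?t)"
    using Ssum_Hoeffding(2)[OF a _ w, of ?t] by simp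
  finally have "lower_admissible a e ?t k"
    using exits spent by (simp add: lower_admissible_def)
  then have "k \<le> L ?t"
    by (rule lower_boundary_ge)
  then show "a * ?t - w - 1 \<le> real_of_int (L ?t)"
    unfolding k_def by linarith
qed

lemma survival_Bern_seq_le:
  assumes a: "0 \<le> a" "a \<le> 1" and w: "w \<ge> 0"
    and spent: "exp (-2 * w\<^sup>2 / real (Suc n)) \<le> e (Suc n) - e n"
    and r: "0 \<le> r" "r \<le> 1" and far: "\<delta> \<le> \<bar>r - a\<bar>" and margin: "w + 1 \<le> \<delta> * real (Suc n)"
  shows "measure (Bern_seq r) {x. enat (Suc n) < stop_time (boundaries a e) x}
           \<le> exp (-2 * (\<delta> * real (Suc n) - w - 1)\<^sup>2 / real (Suc n))"
proof -
  interpret prob_space "Bern_seq r" by (rule prob_space_Bern_seq)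
  let ?t = "Suc n" and ?v = "\<delta> * real (Suc n) - w - 1"
  have v: "?v \<ge> 0" using margin by simp
  have between: "a * ?t - w - 1 < real_of_int (Ssum ?t x) \<and> real_of_int (Ssum ?t x) < a * ?t + w + 1"
    if "enat ?t < stop_time (boundaries a e) x" for x
  proof -
    have "\<not> crosses (boundaries a e) x ?t"
      using that by (simp add: enat_less_stop_time_iff)
    then have "L ?t < Ssum ?t x" "Ssum ?t x < U ?t"
      by (auto simp: crosses_def)
    then show ?thesis
      using boundaries_Hoeffding[OF a w spent] by linarith
  qed
  let ?S = "{x. enat ?t < stop_time (boundaries a e) x}"
  show ?thesis
  proof (cases "a \<le> r")
    case True
    have "\<delta> * ?t \<le> (r - a) * ?t"
      using far True by (intro mult_right_mono) auto
    then have "?S \<subseteq> {x. real_of_int (Ssum ?t x) \<le> r * ?t - ?v}"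
      using between unfolding left_diff_distrib by fastforce
    then have "measure (Bern_seq r) ?S \<le> measure (Bern_seq r) {x. real_of_int (Ssum ?t x) \<le> r * ?t - ?v}"
      using sets_Bern_seq_Ssum[where P="\<lambda>k. real_of_int k \<le> r * ?t - ?v"]
      by (intro finite_measure_mono) auto
    also have "\<dots> \<le> exp (-2 * ?v\<^sup>2 / ?t)"
      using Ssum_Hoeffding(2)[OF r _ v, of ?t] by simp
    finally show ?thesis .
  next
    case False
    have "\<delta> * ?t \<le> (a - r) * ?t"
      using far False by (intro mult_right_mono) auto
    then have "?S \<subseteq> {x. r * ?t + ?v \<le> real_of_int (Ssum ?t x)}"
      using between unfolding left_diff_distrib by fastforce
    then have "measure (Bern_seq r) ?S \<le> measure (Bern_seq r) {x. r * ?t + ?v \<le> real_of_int (Ssum ?t x)}"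
      using sets_Bern_seq_Ssum[where P="\<lambda>k. r * ?t + ?v \<le> real_of_int k"]
      by (intro finite_measure_mono) auto
    also have "\<dots> \<le> exp (-2 * ?v\<^sup>2 / ?t)"
      using Ssum_Hoeffding(1)[OF r _ v, of ?t] by simp
    finally show ?thesis .
  qed
qed

lemma arm_survival_le:
  fixes \<mu> :: "real measure"
  assumes mu: "prob_space \<mu>" "sets \<mu> = sets borel" "AE r in \<mu>. 0 \<le> r \<and> r \<le> 1"
    and a: "0 \<le> a" "a \<le> 1" and w: "w \<ge> 0"
    and spent: "exp (-2 * w\<^sup>2 / real (Suc n)) \<le> e (Suc n) - e n"
    and margin: "w + 1 \<le> \<delta> * real (Suc n)"
  shows "emeasure (arm_law \<mu>) {x \<in> space (arm_law \<mu>). enat (Suc n) < stop_time (boundaries a e) (snd x)}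
     \<le> emeasure \<mu> {r. \<bar>r - a\<bar> < \<delta>} + exp (-2 * (\<delta> * real (Suc n) - w - 1)\<^sup>2 / real (Suc n))"
proof -
  interpret prob_space \<mu> by (rule mu(1))
  let ?A = "{x. enat (Suc n) < stop_time (boundaries a e) x}"
  let ?G = "exp (-2 * (\<delta> * real (Suc n) - w - 1)\<^sup>2 / real (Suc n))"
  let ?D = "{r. \<bar>r - a\<bar> < \<delta>}"
  have D: "?D \<in> sets \<mu>" using mu(2) by simp
  have "emeasure (arm_law \<mu>) {x \<in> space (arm_law \<mu>). enat (Suc n) < stop_time (boundaries a e) (snd x)}
      = (\<integral>\<^sup>+ r. emeasure (Bern_seq r) ?A \<partial>\<mu>)"
    by (simp add: arm_survival_event[OF mu(1,2)] emeasure_arm_law_Times[OF mu(1,2)] sets_stop_time)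
  also have "\<dots> \<le> (\<integral>\<^sup>+ r. indicator ?D r + ennreal ?G \<partial>\<mu>)"
  proof (rule nn_integral_mono_AE)
    show "AE r in \<mu>. emeasure (Bern_seq r) ?A \<le> indicator ?D r + ennreal ?G"
      using mu(3)
    proof eventually_elim
      case (elim r)
      interpret Bern: prob_space "Bern_seq r" by (rule prob_space_Bern_seq)
      show ?case
      proof (cases "r \<in> ?D")
        case True
        then show ?thesis
          using Bern.emeasure_le_1[of ?A] by (simp add: add_increasing2)
      next
        case False
        then have "measure (Bern_seq r) ?A \<le> ?G"
          using elim by (intro survival_Bern_seq_le[OF a w spent _ _ _ margin]) auto
        then show ?thesis
          using False by (simp add: Bern.emeasure_eq_measure)
      qed
    qed
  qed
  also have "\<dots> = emeasure \<mu> ?D + ennreal ?G"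
    using D by (simp add: nn_integral_add emeasure_space_1)
  finally show ?thesis .
qed

lemma arm_survival_le_powr:
  fixes \<mu> :: "real measure"
  assumes a: "0 < a" "a < 1"
    and mu: "prob_space \<mu>" "sets \<mu> = sets borel" "AE r in \<mu>. 0 \<le> r \<and> r \<le> 1"
    and growth: "lam > 0" "\<forall>t\<ge>T. e t - e (t - 1) \<ge> lam * real t powr (- q)"
    and Holder: "\<forall>x\<in>{lo<..<hi}. \<forall>y\<in>{lo<..<hi}. \<bar>measure \<mu> {..x} - measure \<mu> {..y}\<bar> \<le> c * \<bar>x - y\<bar> powr \<xi>"
    and "0 \<le> c" and "T \<le> Suc n"
    and small: "real (Suc n) powr -\<gamma> < min (a - lo) (hi - a)"
    and ln_nonneg: "0 \<le> ln (real (Suc n) powr q / lam)"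
    and margin: "sqrt (real (Suc n) / 2 * ln (real (Suc n) powr q / lam)) + 1 \<le> real (Suc n) powr -\<gamma> * real (Suc n)"
    and decay: "exp (-2 * (real (Suc n) powr -\<gamma> * real (Suc n)
        - sqrt (real (Suc n) / 2 * ln (real (Suc n) powr q / lam)) - 1)\<^sup>2 / real (Suc n))
      \<le> real (Suc n) powr -(\<gamma> * \<xi>)"
  shows "emeasure (arm_law \<mu>) {x \<in> space (arm_law \<mu>). enat (Suc n) < stop_time (boundaries a e) (snd x)}
     \<le> ennreal ((c * 2 powr \<xi> + 1) * real (Suc n) powr -(\<gamma> * \<xi>))"
proof -
  interpret prob_space \<mu> by (rule mu(1))
  let ?t = "real (Suc n)"
  define w where "w = sqrt (?t / 2 * ln (?t powr q / lam))"
  define \<delta> where "\<delta> = ?t powr -\<gamma>"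
  have \<delta>: "0 < \<delta>" "lo < a - \<delta>" "a + \<delta> < hi"
    using small by (auto simp: \<delta>_def)
  have w: "0 \<le> w"
    using ln_nonneg by (simp add: w_def)
  have "exp (-2 * w\<^sup>2 / ?t) = lam * ?t powr -q"
    unfolding w_def using ln_nonneg growth(1) by (intro exp_Hoeffding_radius) auto
  also have "\<dots> \<le> e (Suc n) - e n"
    using growth(2) \<open>T \<le> Suc n\<close> by fastforce
  finally have spent: "exp (-2 * w\<^sup>2 / ?t) \<le> e (Suc n) - e n" .
  have "emeasure (arm_law \<mu>) {x \<in> space (arm_law \<mu>). enat (Suc n) < stop_time (boundaries a e) (snd x)}
      \<le> emeasure \<mu> {r. \<bar>r - a\<bar> < \<delta>} + exp (-2 * (\<delta> * ?t - w - 1)\<^sup>2 / ?t)"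
    using a margin by (intro arm_survival_le[OF mu _ _ w spent]) (simp_all add: w_def \<delta>_def)
  also have "\<dots> \<le> ennreal (c * 2 powr \<xi> * ?t powr -(\<gamma> * \<xi>)) + ennreal (?t powr -(\<gamma> * \<xi>))"
  proof (intro add_mono ennreal_leI)
    have "measure \<mu> {r. \<bar>r - a\<bar> < \<delta>} \<le> c * (2 * \<delta>) powr \<xi>"
      using \<delta> by (intro measure_near_le_Holder[OF mu(1,2) _ _ _ Holder])
    also have "(2 * \<delta>) powr \<xi> = 2 powr \<xi> * ?t powr -(\<gamma> * \<xi>)"
      unfolding \<delta>_def by (simp add: powr_mult powr_powr)
    finally show "emeasure \<mu> {r. \<bar>r - a\<bar> < \<delta>} \<le> ennreal (c * 2 powr \<xi> * ?t powr -(\<gamma> * \<xi>))"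
      by (simp add: emeasure_eq_measure ennreal_leI mult.assoc)
    show "exp (-2 * (\<delta> * ?t - w - 1)\<^sup>2 / ?t) \<le> ?t powr -(\<gamma> * \<xi>)"
      using decay by (simp add: \<delta>_def w_def)
  qed
  also have "\<dots> = ennreal ((c * 2 powr \<xi> + 1) * ?t powr -(\<gamma> * \<xi>))"
    using \<open>0 \<le> c\<close> by (simp add: ennreal_plus[symmetric] distrib_right del: ennreal_plus)
  finally show ?thesis .
qed

lemma eventually_arm_survival_le_powr:
  fixes \<mu> :: "real measure"
  assumes a: "0 < a" "a < 1"
    and mu: "prob_space \<mu>" "sets \<mu> = sets borel" "AE r in \<mu>. 0 \<le> r \<and> r \<le> 1"
    and growth: "lam > 0" "q > 0" "\<forall>t\<ge>T. e t - e (t - 1) \<ge> lam * real t powr (- q)"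
    and Holder: "lo < a" "a < hi" "0 < \<xi>"
      "\<forall>x\<in>{lo<..<hi}. \<forall>y\<in>{lo<..<hi}. \<bar>measure \<mu> {..x} - measure \<mu> {..y}\<bar> \<le> c * \<bar>x - y\<bar> powr \<xi>"
    and "0 \<le> c" and \<gamma>: "0 < \<gamma>" "\<gamma> < 1/2"
  shows "eventually (\<lambda>t. emeasure (arm_law \<mu>) {x \<in> space (arm_law \<mu>). enat t < stop_time (boundaries a e) (snd x)}
     \<le> ennreal ((c * 2 powr \<xi> + 1) * real t powr (-(\<gamma> * \<xi>)))) sequentially"
proof -
  have "0 < min (a - lo) (hi - a)" "0 < \<gamma> * \<xi>"
    using Holder \<gamma> by auto
  from eventually_radius_conditions[OF growth(2,1) \<gamma> this(2,1)]
  have "eventually (\<lambda>n. 1 \<le> real n \<and> real n powr -\<gamma> < min (a - lo) (hi - a)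
      \<and> 0 \<le> ln (real n powr q / lam) \<and> sqrt (real n / 2 * ln (real n powr q / lam)) + 1 \<le> real n powr -\<gamma> * real n
      \<and> exp (-2 * (real n powr -\<gamma> * real n - sqrt (real n / 2 * ln (real n powr q / lam)) - 1)\<^sup>2 / real n)
        \<le> real n powr -(\<gamma> * \<xi>)) sequentially"
    using eventually_compose_filterlim filterlim_real_sequentially by blast
  moreover have "eventually (\<lambda>n. T \<le> n) sequentially"
    by (rule eventually_ge_at_top)
  ultimately show ?thesis
  proof eventually_elim
    case (elim t)
    then obtain n where n: "t = Suc n"
      by (cases t) auto
    show ?case
      using elim unfolding n
      by (intro arm_survival_le_powr[OF a mu growth(1,3) Holder(4) \<open>0 \<le> c\<close>]) blast+
  qed
qed

end

section \<open>Order statistics\<close>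

lemma ennreal_of_enat_eq_suminf:
  "ennreal_of_enat v = (\<Sum>t. if enat t < v then 1 else 0 :: ennreal)"
proof -
  have "(\<lambda>t. if enat t < v then 1 else 0 :: ennreal) sums ennreal_of_enat v"
    using sums_If_finite[of "\<lambda>t. enat t < v" "\<lambda>_. 1 :: ennreal"]
    by (cases v) (simp_all add: sums_def of_nat_tendsto_top_ennreal)
  then show ?thesis by (simp add: sums_iff)
qed

lemma order_stat_gt_imp_subset:
  assumes "length vs = N" "1 \<le> i" "i \<le> N" and "t < order_stat vs i"
  obtains A where "A \<subseteq> {..<N}" "card A = N - i + 1" "\<forall>k\<in>A. t < vs ! k"
proof -
  let ?ws = "sort vs"
  have "t < ?ws ! k" if "i - 1 \<le> k" "k < N" for k
  proof -
    have "?ws ! (i - 1) \<le> ?ws ! k"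
      using that assms(1) by (intro sorted_nth_mono) auto
    with assms(4) show ?thesis
      by (simp add: order_stat_def)
  qed
  then have "card {i - 1..<N} \<le> card {k. k < N \<and> t < ?ws ! k}"
    by (intro card_mono) auto
  also have "card {k. k < N \<and> t < ?ws ! k} = length (filter (\<lambda>v. t < v) ?ws)"
    using assms(1) by (simp add: length_filter_conv_card)
  also have "\<dots> = length (filter (\<lambda>v. t < v) vs)"
    by (metis mset_filter mset_sort size_mset)
  also have "\<dots> = card {k. k < N \<and> t < vs ! k}"
    using assms(1) by (simp add: length_filter_conv_card)
  finally have "N - i + 1 \<le> card {k. k < N \<and> t < vs ! k}"
    using assms(2,3) by simp
  then obtain A where "A \<subseteq> {k. k < N \<and> t < vs ! k}" "card A = N - i + 1"
    by (meson obtain_subset_with_card_n)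
  then show thesis
    by (intro that) auto
qed

lemma PiM_all_in_power:
  fixes M :: "'a measure"
  assumes "prob_space M" "finite I" "A \<subseteq> I" "A \<noteq> {}" "E \<in> sets M"
  shows "{\<omega> \<in> space (PiM I (\<lambda>_. M)). \<forall>k\<in>A. \<omega> k \<in> E} \<in> sets (PiM I (\<lambda>_. M))"
    and "emeasure (PiM I (\<lambda>_. M)) {\<omega> \<in> space (PiM I (\<lambda>_. M)). \<forall>k\<in>A. \<omega> k \<in> E} = emeasure M E ^ card A"
proof -
  interpret product_prob_space "\<lambda>_. M" I
    using assms(1) by (simp add: product_prob_spaceI)
  have "finite A"
    using assms(2,3) by (rule finite_subset[rotated])
  with assms show "{\<omega> \<in> space (PiM I (\<lambda>_. M)). \<forall>k\<in>A. \<omega> k \<in> E} \<in> sets (PiM I (\<lambda>_. M))"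
    by (intro sets.sets_Collect_finite_All' sets_Collect_single') auto
  have "emeasure (PiM I (\<lambda>_. M)) {\<omega> \<in> space (PiM I (\<lambda>_. M)). \<forall>k\<in>A. \<omega> k \<in> E} = (\<Prod>k\<in>A. emeasure M E)"
    using assms \<open>finite A\<close> by (intro emeasure_PiM_Collect) auto
  then show "emeasure (PiM I (\<lambda>_. M)) {\<omega> \<in> space (PiM I (\<lambda>_. M)). \<forall>k\<in>A. \<omega> k \<in> E} = emeasure M E ^ card A"
    by simp
qed

text \<open>The union bound over all \<open>N - i + 1\<close>-element sets of components that all survive past \<open>t\<close>.\<close>

lemma nn_integral_order_stat_le:
  fixes M :: "'a measure" and f :: "'a \<Rightarrow> enat"
  assumes "prob_space M" and meas: "\<And>t. {x \<in> space M. enat t < f x} \<in> sets M"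
    and i: "1 \<le> i" "i \<le> N"
  shows "(\<integral>\<^sup>+\<omega>. ennreal_of_enat (order_stat (map (\<lambda>k. f (\<omega> k)) [0..<N]) i) \<partial>PiM {..<N} (\<lambda>_. M))
     \<le> of_nat (N choose (N - i + 1)) * (\<Sum>t. emeasure M {x \<in> space M. enat t < f x} ^ (N - i + 1))"
proof -
  define m where "m = N - i + 1"
  define Fam where "Fam = {A. A \<subseteq> {..<N} \<and> card A = m}"
  define E where "E t = {x \<in> space M. enat t < f x}" for t :: nat
  define S where "S A t = {\<omega> \<in> space (PiM {..<N} (\<lambda>_. M)). \<forall>k\<in>A. \<omega> k \<in> E t}" for A t
  have Fam: "finite Fam" "card Fam = N choose m"
    unfolding Fam_def by (auto intro: finite_subset[of _ "Pow {..<N}"] simp: n_subsets)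
  have S: "S A t \<in> sets (PiM {..<N} (\<lambda>_. M))" "emeasure (PiM {..<N} (\<lambda>_. M)) (S A t) = emeasure M (E t) ^ m"
    if "A \<in> Fam" for A t
  proof -
    have "A \<subseteq> {..<N}" "A \<noteq> {}" "card A = m"
      using that i by (auto simp: Fam_def m_def)
    then show "S A t \<in> sets (PiM {..<N} (\<lambda>_. M))" "emeasure (PiM {..<N} (\<lambda>_. M)) (S A t) = emeasure M (E t) ^ m"
      using PiM_all_in_power[OF assms(1) finite_lessThan _ _ meas[of t]] by (simp_all add: S_def E_def)
  qed
  have pointwise: "(if enat t < order_stat (map (\<lambda>k. f (\<omega> k)) [0..<N]) i then 1 else 0)
      \<le> (\<Sum>A\<in>Fam. indicator (S A t) \<omega> :: ennreal)"
    if \<omega>: "\<omega> \<in> space (PiM {..<N} (\<lambda>_. M))" for \<omega> t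
  proof (cases "enat t < order_stat (map (\<lambda>k. f (\<omega> k)) [0..<N]) i")
    case True
    moreover have "length (map (\<lambda>k. f (\<omega> k)) [0..<N]) = N"
      by simp
    ultimately obtain A where A: "A \<subseteq> {..<N}" "card A = m"
      "\<forall>k\<in>A. enat t < map (\<lambda>k. f (\<omega> k)) [0..<N] ! k"
      using order_stat_gt_imp_subset[OF _ i] unfolding m_def by metis
    moreover have "\<forall>k\<in>A. enat t < f (\<omega> k)"
      using A(1,3) by (auto simp: subset_iff)
    ultimately have "A \<in> Fam" "\<omega> \<in> S A t"
      using \<omega> by (auto simp: Fam_def S_def E_def space_PiM PiE_iff)
    then show ?thesis
      using True Fam(1) member_le_sum[of A Fam "\<lambda>A. indicator (S A t) \<omega> :: ennreal"] by simp
  qed simp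
  have "(\<integral>\<^sup>+\<omega>. ennreal_of_enat (order_stat (map (\<lambda>k. f (\<omega> k)) [0..<N]) i) \<partial>PiM {..<N} (\<lambda>_. M))
      \<le> (\<integral>\<^sup>+\<omega>. (\<Sum>t. \<Sum>A\<in>Fam. indicator (S A t) \<omega>) \<partial>PiM {..<N} (\<lambda>_. M))"
    unfolding ennreal_of_enat_eq_suminf by (intro nn_integral_mono suminf_le pointwise) auto
  also have "\<dots> = (\<Sum>t. \<Sum>A\<in>Fam. emeasure (PiM {..<N} (\<lambda>_. M)) (S A t))"
    using S(1) by (simp add: nn_integral_suminf nn_integral_sum)
  also have "\<dots> = (\<Sum>t. of_nat (N choose m) * emeasure M (E t) ^ m)"
    using S(2) Fam(2) by simp
  also have "\<dots> = of_nat (N choose m) * (\<Sum>t. emeasure M (E t) ^ m)"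
    by (rule ennreal_suminf_cmult)
  finally show ?thesis
    by (simp add: m_def E_def)
qed

lemma suminf_power_finite:
  fixes p :: "nat \<Rightarrow> ennreal"
  assumes le_1: "\<And>t. p t \<le> 1" and tail: "eventually (\<lambda>t. p t \<le> ennreal (C * real t powr -\<beta>)) sequentially"
    and "0 \<le> C" and "1 < \<beta> * real m"
  shows "(\<Sum>t. p t ^ m) < \<infinity>"
proof -
  obtain t0 where t0: "\<And>t. t0 \<le> t \<Longrightarrow> 1 \<le> t \<and> p t \<le> ennreal (C * real t powr -\<beta>)"
    using eventually_conj[OF eventually_ge_at_top[of 1] tail] by (auto simp: eventually_sequentially)
  define g where "g t = (if t < t0 then 1 else C ^ m * real t powr (-(\<beta> * real m)))" for t
  have "p t ^ m \<le> ennreal (g t)" for t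
  proof (cases "t < t0")
    case False
    then have "p t ^ m \<le> ennreal (C * real t powr -\<beta>) ^ m"
      using t0 by (intro power_mono) auto
    also have "\<dots> = ennreal (C ^ m * real t powr (-(\<beta> * real m)))"
      using \<open>0 \<le> C\<close> t0[of t] False
      by (simp add: ennreal_power power_mult_distrib powr_power mult.commute)
    finally show ?thesis
      using False by (simp add: g_def)
  qed (use le_1 in \<open>simp add: g_def power_le_one\<close>)
  moreover have "summable g"
  proof (rule summable_cong[THEN iffD2])
    show "eventually (\<lambda>t. g t = C ^ m * real t powr (-(\<beta> * real m))) sequentially"
      unfolding g_def eventually_sequentially by (intro exI[of _ t0]) auto
    show "summable (\<lambda>t. C ^ m * real t powr (-(\<beta> * real m)))"
      using \<open>1 < \<beta> * real m\<close> by (intro summable_mult) (simp add: summable_real_powr_iff)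
  qed
  moreover have "0 \<le> g t" for t
    using \<open>0 \<le> C\<close> by (simp add: g_def)
  ultimately have "(\<Sum>t. p t ^ m) \<le> ennreal (\<Sum>t. g t)"
    by (simp add: suminf_le suminf_ennreal2 flip: suminf_ennreal2)
  then show ?thesis
    using top.not_eq_extremum by (fastforce simp: top_unique)
qed

lemma exponent_for_order_stat:
  fixes \<xi> :: real
  assumes "0 < \<xi>" "int i \<le> int N - \<lfloor>2 / \<xi>\<rfloor>"
  shows "i \<le> N" and "\<exists>\<gamma>>0. \<gamma> < 1/2 \<and> 1 < \<gamma> * \<xi> * real (N - i + 1)"
proof -
  have "0 \<le> \<lfloor>2 / \<xi>\<rfloor>" using assms(1) by simp
  with assms(2) show "i \<le> N" by linarith
  then have "2 / \<xi> < real (N - i + 1)"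
    using assms(2) by linarith
  define X where "X = \<xi> * real (N - i + 1)"
  have "2 < X"
    unfolding X_def using \<open>2 / \<xi> < _\<close> assms(1) by (simp add: field_simps)
  define \<gamma> where "\<gamma> = (1 / X + 1/2) / 2"
  have "0 < \<gamma>" "\<gamma> < 1/2" "1 < \<gamma> * X"
    using \<open>2 < X\<close> by (auto simp: \<gamma>_def field_simps)
  then show "\<exists>\<gamma>>0. \<gamma> < 1/2 \<and> 1 < \<gamma> * \<xi> * real (N - i + 1)"
    by (auto simp: X_def mult.assoc)
qed

theorem theorem1:
  fixes \<alpha> \<epsilon> lam q \<xi> :: real and e :: "nat \<Rightarrow> real" and T N :: nat
    and \<mu> :: "real measure" and F :: "real \<Rightarrow> real"
  assumes alpha: "0 < \<alpha>" "\<alpha> < 1"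
    and eps: "0 < \<epsilon>" "\<epsilon> \<le> 1/4"
    and spend: "0 \<le> e 0" "incseq e" "e \<longlonglongrightarrow> \<epsilon>"
    and growth: "lam > 0" "q > 1" "T \<ge> 1" "\<forall>t\<ge>T. e t - e (t - 1) \<ge> lam * real t powr (- q)"
    and mu: "prob_space \<mu>" "sets \<mu> = sets borel" "AE x in \<mu>. 0 \<le> x \<and> x \<le> 1"
    and F: "F = (\<lambda>x. measure \<mu> {..x})"
    and holder: "\<xi> > 0" "\<exists>a b c. a < \<alpha> \<and> \<alpha> < b \<and> c > 0 \<and>
        (\<forall>x\<in>{a<..<b}. \<forall>y\<in>{a<..<b}. \<bar>F x - F y\<bar> \<le> c * \<bar>x - y\<bar> powr \<xi>)"
  shows "\<forall>i. 1 \<le> i \<and> int i \<le> int N - \<lfloor>2 / \<xi>\<rfloor> \<longrightarrow>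
     (\<integral>\<^sup>+ \<omega>. ennreal_of_enat
        (order_stat (map (\<lambda>k. stop_time (boundaries \<alpha> e) (snd (\<omega> k))) [0..<N]) i)
      \<partial>(PiM {..<N} (\<lambda>_. arm_law \<mu>))) < \<infinity>"
proof (intro allI impI, elim conjE)
  fix i assume "1 \<le> i" "int i \<le> int N - \<lfloor>2 / \<xi>\<rfloor>"
  note exponent = exponent_for_order_stat[OF holder(1) this(2)]
  obtain \<gamma> where \<gamma>: "0 < \<gamma>" "\<gamma> < 1/2" "1 < \<gamma> * \<xi> * real (N - i + 1)"
    using exponent(2) by blast
  obtain lo hi c where Holder: "lo < \<alpha>" "\<alpha> < hi" "0 < c"
    "\<forall>x\<in>{lo<..<hi}. \<forall>y\<in>{lo<..<hi}. \<bar>measure \<mu> {..x} - measure \<mu> {..y}\<bar> \<le> c * \<bar>x - y\<bar> powr \<xi>"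
    using holder(2) unfolding F by blast
  interpret quarter_spending \<alpha> e
  proof
    show "e t \<le> 1/4" for t
      using incseq_le[OF spend(2,3), of t] eps(2) by simp
  qed (fact spend)+
  interpret arm: prob_space "arm_law \<mu>"
    by (rule prob_space_arm_law[OF mu(1,2)])
  let ?p = "\<lambda>t. emeasure (arm_law \<mu>) {x \<in> space (arm_law \<mu>). enat t < stop_time (boundaries \<alpha> e) (snd x)}"
  have "(\<Sum>t. ?p t ^ (N - i + 1)) < \<infinity>"
    using eventually_arm_survival_le_powr[OF alpha mu growth(1) _ growth(4) Holder(1,2) holder(1) Holder(4) _ \<gamma>(1,2)]
      growth(2) Holder(3) \<gamma>(3)
    by (intro suminf_power_finite[where C = "c * 2 powr \<xi> + 1"] arm.emeasure_le_1) auto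
  then show "(\<integral>\<^sup>+ \<omega>. ennreal_of_enat
        (order_stat (map (\<lambda>k. stop_time (boundaries \<alpha> e) (snd (\<omega> k))) [0..<N]) i)
      \<partial>(PiM {..<N} (\<lambda>_. arm_law \<mu>))) < \<infinity>"
    by (intro le_less_trans[OF nn_integral_order_stat_le[OF arm.prob_space_axioms
          sets_arm_survival_event[OF mu(1,2)] \<open>1 \<le> i\<close> exponent(1)]])
      (simp add: ennreal_mult_less_top of_nat_less_top)
qed

end
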